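(* Let $(X,d)$ be a compact metric space with $\operatorname{diam}(X,d)=1/2$, with hyperbolic filling $\mathcal S$ whose parameters satisfy $a\ge\lambda\ge2$ and $\lambda\ge1+\frac{a}{a-1}$. Let $x,y\in X$ and let $(z,m),(w,n)\in\mathcal S$ with $x\in B(z,a^{-m})$, $y\in B(w,a^{-n})$ and $a^{-m}+a^{-n}<a^{-2}d(x,y)$. Then every $u\in c(x,y)$ is a $K$-approximate center, with $K=80$, of every geodesic triangle $[v_0,(z,m),(w,n)]$ in $(\tilde{\mathcal S},D_1)$.
   Context: Hyperbolic filling: $X_0\subset X_1\subset\cdots$ increasing, each $X_n$ a maximal $a^{-n}$-separated subset of $X$; $X_0=\{x_0\}$. $\mathcal S_n=\{(x,n):x\in X_n\}$, $\mathcal S=\bigcup_n\mathcal S_n$, $v_0=(x_0,0)$. $D_1$ is the graph distance on $\mathcal S$ for the graph where distinct $(x,n),(y,m)$ are adjacent iff either $n=m$ and $B(x,\lambda a^{-n})\cap B(y,\lambda a^{-n})\ne\emptyset$, or $|n-m|=1$ and $B(x,a^{-n})\cap B(y,a^{-m})\ne\emptyset$. $(\tilde{\mathcal S},D_1)$ is the geodesic metric space obtained from this graph by replacing each edge with an isometric copy of $[0,1]$ (so $\mathcal S\subset\tilde{\mathcal S}$ and $D_1$ extends the graph distance). A geodesic triangle $[p,q,r]$ is a union of geodesic segments $[p,q]\cup[q,r]\cup[r,p]$; a point $c$ is a $K$-approximate center of it if its distance to each of the three sides is at most $K$. For distinct $x,y\in X$, let $\tilde n$ be the largest integer such that $\{x,y\}\subset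 B(\tilde z,2a^{-\tilde n})$ for some $(\tilde z,\tilde n)\in\mathcal S$, and $c(x,y)=\{(\tilde z,\tilde n)\in\mathcal S:\{x,y\}\subset B(\tilde z,2a^{-\tilde n})\}$. *)

theory Defs
  imports "HOL-Analysis.Analysis"
begin

type_synonym 'a hvert = "'a \<times> nat"
type_synonym 'a mgpoint = "'a hvert \<times> 'a hvert \<times> real"

definition Bl :: "'a::metric_space set \<Rightarrow> 'a \<Rightarrow> real \<Rightarrow> 'a set" where
  "Bl X x r = {y \<in> X. dist x y < r}"

definition separated :: "real \<Rightarrow> 'a::metric_space set \<Rightarrow> bool" where
  "separated e A \<longleftrightarrow> (\<forall>p\<in>A. \<forall>q\<in>A. p \<noteq> q \<longrightarrow> e \<le> dist p q)"

definition maximal_separated :: "'a::metric_space set \<Rightarrow> real \<Rightarrow> 'a set \<Rightarrow> bool" where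
  "maximal_separated X e A \<longleftrightarrow> A \<subseteq> X \<and> separated e A \<and>
     (\<forall>B. A \<subseteq> B \<and> B \<subseteq> X \<and> separated e B \<longrightarrow> B = A)"

definition filling_seq :: "'a::metric_space set \<Rightarrow> real \<Rightarrow> (nat \<Rightarrow> 'a set) \<Rightarrow> 'a \<Rightarrow> bool" where
  "filling_seq X a Xs x0 \<longleftrightarrow> Xs 0 = {x0} \<and> (\<forall>n. Xs n \<subseteq> Xs (Suc n)) \<and>
     (\<forall>n. maximal_separated X (1 / a ^ n) (Xs n))"

definition hfS :: "(nat \<Rightarrow> 'a set) \<Rightarrow> 'a hvert set" where
  "hfS Xs = {(x, n). x \<in> Xs n}"

definition hf_adj :: "'a::metric_space set \<Rightarrow> real \<Rightarrow> real \<Rightarrow> (nat \<Rightarrow> 'a set) \<Rightarrow>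
    'a hvert \<Rightarrow> 'a hvert \<Rightarrow> bool" where
  "hf_adj X a lam Xs p q \<longleftrightarrow> p \<in> hfS Xs \<and> q \<in> hfS Xs \<and> p \<noteq> q \<and>
     ((snd p = snd q \<and> Bl X (fst p) (lam / a ^ snd p) \<inter> Bl X (fst q) (lam / a ^ snd q) \<noteq> {}) \<or>
      ((snd p = Suc (snd q) \<or> snd q = Suc (snd p)) \<and>
         Bl X (fst p) (1 / a ^ snd p) \<inter> Bl X (fst q) (1 / a ^ snd q) \<noteq> {}))"

definition hf_graph_dist :: "'a::metric_space set \<Rightarrow> real \<Rightarrow> real \<Rightarrow> (nat \<Rightarrow> 'a set) \<Rightarrow>
    'a hvert \<Rightarrow> 'a hvert \<Rightarrow> nat" where
  "hf_graph_dist X a lam Xs p q = (LEAST k. \<exists>ps. length ps = Suc k \<and> hd ps = p \<and> last ps = q \<and>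
     set ps \<subseteq> hfS Xs \<and> (\<forall>i<k. hf_adj X a lam Xs (ps ! i) (ps ! Suc i)))"

text \<open>Points of the metric graph: (u, v, t) is the point at distance t from u on the
  edge from u to v (t in [0,1]); a vertex u is represented by (u, u, 0).\<close>
definition mg_points :: "'a::metric_space set \<Rightarrow> real \<Rightarrow> real \<Rightarrow> (nat \<Rightarrow> 'a set) \<Rightarrow> 'a mgpoint set" where
  "mg_points X a lam Xs = {(u, v, t). u \<in> hfS Xs \<and>
      ((hf_adj X a lam Xs u v \<and> 0 \<le> t \<and> t \<le> 1) \<or> (v = u \<and> t = 0))}"

definition vtx :: "'a hvert \<Rightarrow> 'a mgpoint" where
  "vtx u = (u, u, 0)"

text \<open>The length metric D_1 of the metric graph (each edge an isometric copy of [0,1]).\<close>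
definition D1 :: "'a::metric_space set \<Rightarrow> real \<Rightarrow> real \<Rightarrow> (nat \<Rightarrow> 'a set) \<Rightarrow>
    'a mgpoint \<Rightarrow> 'a mgpoint \<Rightarrow> real" where
  "D1 X a lam Xs p q =
    (let (u1, v1, s) = p; (u2, v2, t) = q;
         G = (\<lambda>b c. real (hf_graph_dist X a lam Xs b c));
         via = Min {s + G u1 u2 + t, s + G u1 v2 + (1 - t),
                    (1 - s) + G v1 u2 + t, (1 - s) + G v1 v2 + (1 - t)}
     in if u1 \<noteq> v1 \<and> u1 = u2 \<and> v1 = v2 then min \<bar>s - t\<bar> via
        else if u1 \<noteq> v1 \<and> u1 = v2 \<and> v1 = u2 then min \<bar>s - (1 - t)\<bar> via
        else via)"

definition geodesic_seg :: "'a::metric_space set \<Rightarrow> real \<Rightarrow> real \<Rightarrow> (nat \<Rightarrow> 'a set) \<Rightarrow>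
    'a mgpoint \<Rightarrow> 'a mgpoint \<Rightarrow> 'a mgpoint set \<Rightarrow> bool" where
  "geodesic_seg X a lam Xs p q P \<longleftrightarrow> (\<exists>\<gamma> L. L = D1 X a lam Xs p q \<and> \<gamma> ` {0..L} = P \<and>
     \<gamma> 0 = p \<and> \<gamma> L = q \<and> (\<forall>s\<in>{0..L}. \<gamma> s \<in> mg_points X a lam Xs) \<and>
     (\<forall>s\<in>{0..L}. \<forall>t\<in>{0..L}. D1 X a lam Xs (\<gamma> s) (\<gamma> t) = \<bar>s - t\<bar>))"

definition approx_center :: "'a::metric_space set \<Rightarrow> real \<Rightarrow> real \<Rightarrow> (nat \<Rightarrow> 'a set) \<Rightarrow>
    real \<Rightarrow> 'a mgpoint \<Rightarrow> 'a mgpoint set \<Rightarrow> 'a mgpoint set \<Rightarrow> 'a mgpoint set \<Rightarrow> bool" where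
  "approx_center X a lam Xs K c P1 P2 P3 \<longleftrightarrow>
     (\<forall>P\<in>{P1, P2, P3}. (INF r\<in>P. D1 X a lam Xs c r) \<le> K)"

definition ctr_level :: "'a::metric_space set \<Rightarrow> real \<Rightarrow> (nat \<Rightarrow> 'a set) \<Rightarrow> 'a \<Rightarrow> 'a \<Rightarrow> nat" where
  "ctr_level X a Xs x y = (GREATEST n. \<exists>z\<in>Xs n. x \<in> Bl X z (2 / a ^ n) \<and> y \<in> Bl X z (2 / a ^ n))"

definition ctr :: "'a::metric_space set \<Rightarrow> real \<Rightarrow> (nat \<Rightarrow> 'a set) \<Rightarrow> 'a \<Rightarrow> 'a \<Rightarrow> 'a hvert set" where
  "ctr X a Xs x y = {(z, ctr_level X a Xs x y) | z. z \<in> Xs (ctr_level X a Xs x y) \<and>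
      x \<in> Bl X z (2 / a ^ ctr_level X a Xs x y) \<and> y \<in> Bl X z (2 / a ^ ctr_level X a Xs x y)}"

end

theory Submission
  imports Defs
begin

(* Along an edge path of the filling the centres are controlled by the levels alone: if the path
   has gone down to level T, now sits at level k, and is e steps longer than the vertical route
   from its start down to level T and back up, then its centre lies within
   (6 + 2 lam e)/a^T - 3/a^k of the starting centre (walk_dist_bound).

   A geodesic of the metric graph between two vertices passes through vertices at integer times,
   consecutive ones adjacent, so it carries a shortest edge path. Let u = (zt, nt). A shortest
   path from v_0 to (z, m) is vertical, so at level nt it is within 3/a^nt of z and hence at
   graph distance at most 7 from u; likewise for (w, n). On a shortest path from (z, m) to
   (w, n), d(z, w) < 5/a^nt bounds its length, which keeps its lowest level T >= nt - 3, while
   d(z, w) > (3/4)/a^(nt+1) against the decay of the estimate gives T <= nt + 8. The lowest vertex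
   is then within a^10/a^nt of zt, hence at graph distance at most 29 from u. *)

lemma geometric_tail_step:
  fixes a :: real assumes "a > 1"
  shows "a / (a - 1) / a ^ k - a / (a - 1) / a ^ Suc k = 1 / a ^ k"
proof -
  have "a / (a - 1) / a ^ k - a / (a - 1) / a ^ Suc k = a / (a - 1) * (1 / a ^ k - 1 / (a * a ^ k))"
    by (simp add: right_diff_distrib)
  also have "1 / a ^ k - 1 / (a * a ^ k) = (a - 1) / (a * a ^ k)"
    using assms by (simp add: field_simps)
  finally show ?thesis
    using assms by simp
qed

lemma linear_le_power:
  fixes a :: real assumes "2 \<le> a" "9 \<le> t"
  shows "6 + 2 * a * (2 * real t + 7) \<le> 3 / 4 * a ^ (t - 1)"
proof -
  have "4 * real t + 17 \<le> 3 / 4 * 2 ^ (t - 2)"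
    using assms(2)
  proof (induction t rule: nat_induct_at_least)
    case (Suc t)
    then have "Suc t - 2 = Suc (t - 2)"
      by simp
    then have "(2::real) ^ (Suc t - 2) = 2 * 2 ^ (t - 2)"
      by simp
    moreover have "(1::real) \<le> 2 ^ (t - 2)"
      by simp
    ultimately show ?case
      using Suc.IH by simp
  qed simp
  moreover have "(2::real) ^ (t - 2) \<le> a ^ (t - 2)"
    using assms(1) by (intro power_mono) auto
  ultimately have "a * (4 * real t + 17) \<le> a * (3 / 4 * a ^ (t - 2))"
    using assms(1) by (intro mult_left_mono) auto
  moreover have "t - 1 = Suc (t - 2)"
    using assms(2) by simp
  then have "a * a ^ (t - 2) = a ^ (t - 1)"
    by simp
  ultimately show ?thesis
    using assms(1) by (simp add: algebra_simps)
qed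

lemma power_ten_bound:
  fixes a :: real assumes "2 \<le> a" shows "(3 + 46 * a) * a ^ 3 + 3 \<le> a ^ 10"
proof -
  have "64 \<le> a ^ 6" "3 \<le> a ^ 3"
    using power_mono[OF assms, of 6] power_mono[OF assms, of 3] by simp_all
  moreover have "2 * a ^ 3 \<le> a * a ^ 3"
    using assms by (intro mult_right_mono) auto
  moreover have a4: "a * a ^ 3 = a ^ 4"
    by (simp add: eval_nat_numeral)
  moreover have "(3 + 46 * a) * a ^ 3 + 3 = 3 + 3 * a ^ 3 + 46 * a ^ 4"
    using a4 by (simp add: algebra_simps)
  ultimately have "(3 + 46 * a) * a ^ 3 + 3 \<le> 64 * a ^ 4"
    by linarith
  also have "\<dots> \<le> a ^ 6 * a ^ 4"
    using \<open>64 \<le> a ^ 6\<close> assms by (intro mult_right_mono) auto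
  finally show ?thesis
    by (simp flip: power_add)
qed

lemma Bl_Int_nonempty_dist_less:
  "Bl X c r \<inter> Bl X c' r' \<noteq> {} \<Longrightarrow> dist c c' < r + r'"
  unfolding Bl_def by (smt (verit, best) disjoint_iff_not_equal dist_triangle2 mem_Collect_eq)

definition lowest_level :: "(nat \<Rightarrow> 'a hvert) \<Rightarrow> nat \<Rightarrow> nat" where
  "lowest_level f i = Min ((\<lambda>j. snd (f j)) ` {..i})"

lemma lowest_level_le: "j \<le> i \<Longrightarrow> lowest_level f i \<le> snd (f j)"
  unfolding lowest_level_def by simp

lemma lowest_level_attained: "\<exists>j\<le>i. snd (f j) = lowest_level f i"
proof -
  have "lowest_level f i \<in> (\<lambda>j. snd (f j)) ` {..i}"
    unfolding lowest_level_def by (rule Min_in) auto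
  then show ?thesis by auto
qed

lemma lowest_level_antimono: "i \<le> j \<Longrightarrow> lowest_level f j \<le> lowest_level f i"
  unfolding lowest_level_def by (intro Min_antimono) auto

lemma lowest_level_0: "lowest_level f 0 = snd (f 0)"
  unfolding lowest_level_def by simp

lemma lowest_level_Suc: "lowest_level f (Suc i) = min (lowest_level f i) (snd (f (Suc i)))"
  unfolding lowest_level_def atMost_Suc image_insert
  by (simp add: min.commute)

text \<open>The excess of the walk f up to step i over the shortest route that goes vertically from f 0
  down to the lowest level of f 0, ..., f i and back up to f i.\<close>
definition walk_excess :: "(nat \<Rightarrow> 'a hvert) \<Rightarrow> nat \<Rightarrow> real" where
  "walk_excess f i = real i + 2 * real (lowest_level f i) - real (snd (f 0)) - real (snd (f i))"

locale hyperbolic_filling =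
  fixes X :: "'a::metric_space set" and a lam :: real and Xs :: "nat \<Rightarrow> 'a set" and x0 :: 'a
  assumes filling: "filling_seq X a Xs x0" and lam_le_a: "lam \<le> a" and two_le_lam: "2 \<le> lam"
    and ratio_le_lam: "1 + a / (a - 1) \<le> lam"
begin

abbreviation "adj \<equiv> hf_adj X a lam Xs"
abbreviation "S \<equiv> hfS Xs"
abbreviation "G \<equiv> hf_graph_dist X a lam Xs"

lemma two_le_a: "2 \<le> a"
  using lam_le_a two_le_lam by linarith

lemma a_pos: "0 < a"
  using two_le_a by linarith

lemma inverse_power_antimono: "k \<le> k' \<Longrightarrow> 1 / a ^ k' \<le> 1 / a ^ k"
  using two_le_a by (intro divide_left_mono power_increasing) auto

lemma Xs_subset: "Xs k \<subseteq> X"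
  using filling unfolding filling_seq_def maximal_separated_def by blast

lemma Xs_0: "Xs 0 = {x0}"
  using filling unfolding filling_seq_def by blast

lemma root_in_S: "(x0, 0) \<in> S"
  using Xs_0 unfolding hfS_def by simp

lemma exists_close_center:
  assumes "c \<in> X" shows "\<exists>c'\<in>Xs k. dist c c' < 1 / a ^ k"
proof (rule ccontr)
  assume far: "\<not> ?thesis"
  have ms: "maximal_separated X (1 / a ^ k) (Xs k)"
    using filling unfolding filling_seq_def by blast
  have "separated (1 / a ^ k) (insert c (Xs k))"
    using ms far unfolding maximal_separated_def separated_def by (auto simp: dist_commute not_less)
  with ms assms have "c \<in> Xs k"
    unfolding maximal_separated_def by blast
  with far a_pos show False by force
qed

lemma adj_sym: "adj p q \<Longrightarrow> adj q p"
  unfolding hf_adj_def by (auto simp: Int_commute)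

lemma adj_in_S: "adj p q \<Longrightarrow> p \<in> S \<and> q \<in> S"
  unfolding hf_adj_def by auto

lemma adj_level: "adj p q \<Longrightarrow> snd q \<le> Suc (snd p)"
  unfolding hf_adj_def by auto

lemma adj_dist:
  assumes "adj (c, k) (c', k')"
  shows "(k' = k \<and> dist c c' < 2 * lam / a ^ k) \<or>
         ((k = Suc k' \<or> k' = Suc k) \<and> dist c c' < 1 / a ^ k + 1 / a ^ k')"
  using assms Bl_Int_nonempty_dist_less unfolding hf_adj_def by fastforce

lemma adj_parent:
  assumes "c \<in> Xs (Suc k)" "c' \<in> Xs k" "dist c c' < 1 / a ^ k"
  shows "adj (c, Suc k) (c', k)"
proof -
  have "c \<in> Bl X c (1 / a ^ Suc k) \<inter> Bl X c' (1 / a ^ k)"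
    using assms Xs_subset a_pos unfolding Bl_def by (auto simp: dist_commute)
  then show ?thesis
    using assms unfolding hf_adj_def hfS_def by auto
qed

section \<open>Edge paths and the graph distance\<close>

definition walk :: "(nat \<Rightarrow> 'a hvert) \<Rightarrow> nat \<Rightarrow> 'a hvert \<Rightarrow> 'a hvert \<Rightarrow> bool" where
  "walk f k p q \<longleftrightarrow> f 0 = p \<and> f k = q \<and> (\<forall>i\<le>k. f i \<in> S) \<and> (\<forall>i<k. adj (f i) (f (Suc i)))"

lemma walk_refl: "p \<in> S \<Longrightarrow> walk (\<lambda>_. p) 0 p p"
  unfolding walk_def by auto

lemma walk_edge: "adj p q \<Longrightarrow> walk (\<lambda>i. if i = 0 then p else q) 1 p q"
  unfolding walk_def using adj_in_S by auto

lemma walk_rev: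
  assumes f: "walk f k p q" shows "walk (\<lambda>i. f (k - i)) k q p"
  unfolding walk_def
proof (intro conjI allI impI)
  show "f (k - 0) = q" "f (k - k) = p" "\<And>i. i \<le> k \<Longrightarrow> f (k - i) \<in> S"
    using f by (auto simp: walk_def)
  fix i assume "i < k"
  then have "k - i = Suc (k - Suc i)" "k - Suc i < k" by auto
  then show "adj (f (k - i)) (f (k - Suc i))"
    using f adj_sym unfolding walk_def by metis
qed

lemma walk_append:
  assumes f: "walk f k p q" and g: "walk g l q r"
  shows "walk (\<lambda>i. if i \<le> k then f i else g (i - k)) (k + l) p r"
  unfolding walk_def
proof (intro conjI allI impI)
  show "(if 0 \<le> k then f 0 else g (0 - k)) = p"
    using f by (simp add: walk_def)
  show "(if k + l \<le> k then f (k + l) else g (k + l - k)) = r"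
    using f g by (cases "l = 0") (auto simp: walk_def)
  show "(if i \<le> k then f i else g (i - k)) \<in> S" if "i \<le> k + l" for i
    using f g that by (auto simp: walk_def)
  fix i assume i: "i < k + l"
  show "adj (if i \<le> k then f i else g (i - k)) (if Suc i \<le> k then f (Suc i) else g (Suc i - k))"
  proof (cases "i < k")
    case True
    then show ?thesis using f by (simp add: walk_def)
  next
    case False
    then have "Suc i - k = Suc (i - k)" "i - k < l" using i by auto
    moreover have "(if i \<le> k then f i else g (i - k)) = g (i - k)"
      using False f g by (auto simp: walk_def)
    ultimately show ?thesis using False g by (simp add: walk_def)
  qed
qed

lemma hf_graph_dist_eq_Least_walk: "G p q = (LEAST k. \<exists>f. walk f k p q)"
proof -
  have "(\<exists>ps. length ps = Suc k \<and> hd ps = p \<and> last ps = q \<and> set ps \<subseteq> S \<and>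
      (\<forall>i<k. adj (ps ! i) (ps ! Suc i))) \<longleftrightarrow> (\<exists>f. walk f k p q)" for k
  proof
    assume "\<exists>ps. length ps = Suc k \<and> hd ps = p \<and> last ps = q \<and> set ps \<subseteq> S \<and>
      (\<forall>i<k. adj (ps ! i) (ps ! Suc i))"
    then obtain ps where ps: "length ps = Suc k" "hd ps = p" "last ps = q" "set ps \<subseteq> S"
      "\<forall>i<k. adj (ps ! i) (ps ! Suc i)" by blast
    then have "walk ((!) ps) k p q"
      unfolding walk_def by (auto simp: hd_conv_nth last_conv_nth simp flip: length_greater_0_conv)
    then show "\<exists>f. walk f k p q" by blast
  next
    assume "\<exists>f. walk f k p q"
    then obtain f where f: "walk f k p q" by blast
    let ?ps = "map f [0..<Suc k]"
    have nth: "?ps ! i = f i" if "i \<le> k" for i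
      using that by (simp del: upt_Suc)
    have "length ?ps = Suc k \<and> hd ?ps = p \<and> last ?ps = q \<and> set ?ps \<subseteq> S \<and>
        (\<forall>i<k. adj (?ps ! i) (?ps ! Suc i))"
      using f nth[of 0] nth[of k] nth unfolding walk_def
      by (auto simp: hd_conv_nth last_conv_nth simp del: upt_Suc)
    then show "\<exists>ps. length ps = Suc k \<and> hd ps = p \<and> last ps = q \<and> set ps \<subseteq> S \<and>
      (\<forall>i<k. adj (ps ! i) (ps ! Suc i))" by blast
  qed
  then show ?thesis
    unfolding hf_graph_dist_def by simp
qed

lemma graph_dist_le_walk: "walk f k p q \<Longrightarrow> G p q \<le> k"
  unfolding hf_graph_dist_eq_Least_walk by (rule Least_le) blast

lemma walk_ancestor:
  assumes "c \<in> Xs k" "j \<le> k"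
  shows "\<exists>f c'. walk f (k - j) (c, k) (c', j) \<and> c' \<in> Xs j \<and>
           dist c c' \<le> a / (a - 1) / a ^ j - a / (a - 1) / a ^ k"
  using assms
proof (induction k arbitrary: c)
  case 0
  then show ?case
    using walk_refl[of "(c, 0)"] by (auto simp: hfS_def)
next
  case (Suc k)
  show ?case
  proof (cases "j = Suc k")
    case True
    then show ?thesis
      using Suc.prems walk_refl[of "(c, Suc k)"] by (auto simp: hfS_def)
  next
    case False
    then have "j \<le> k" using Suc.prems by auto
    obtain c1 where c1: "c1 \<in> Xs k" "dist c c1 < 1 / a ^ k"
      using exists_close_center Suc.prems Xs_subset by blast
    obtain f c' where f: "walk f (k - j) (c1, k) (c', j)" "c' \<in> Xs j"
      "dist c1 c' \<le> a / (a - 1) / a ^ j - a / (a - 1) / a ^ k"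
      using Suc.IH[OF c1(1) \<open>j \<le> k\<close>] by blast
    have "Suc k - j = 1 + (k - j)"
      using \<open>j \<le> k\<close> by simp
    then obtain h where h: "walk h (Suc k - j) (c, Suc k) (c', j)"
      using walk_append[OF walk_edge[OF adj_parent[OF Suc.prems(1) c1]] f(1)] by auto
    have "a / (a - 1) / a ^ k - a / (a - 1) / a ^ Suc k = 1 / a ^ k"
      using geometric_tail_step two_le_a by simp
    then have "dist c c' \<le> a / (a - 1) / a ^ j - a / (a - 1) / a ^ Suc k"
      using dist_triangle[of c c' c1] c1(2) f(3) by linarith
    then show ?thesis
      using h f(2) by blast
  qed
qed

lemma walk_to_root: "p \<in> S \<Longrightarrow> \<exists>f. walk f (snd p) p (x0, 0)"
  using walk_ancestor[of "fst p" "snd p" 0] Xs_0 unfolding hfS_def by auto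

lemma shortest_walk:
  assumes "p \<in> S" "q \<in> S" shows "\<exists>f. walk f (G p q) p q"
proof -
  obtain f g where f: "walk f (snd p) p (x0, 0)" and g: "walk g (snd q) q (x0, 0)"
    using walk_to_root assms by blast
  from walk_append[OF f walk_rev[OF g]] have "\<exists>k f. walk f k p q"
    by blast
  then show ?thesis
    unfolding hf_graph_dist_eq_Least_walk by (rule LeastI_ex)
qed

lemma graph_dist_self: "p \<in> S \<Longrightarrow> G p p = 0"
  using graph_dist_le_walk[OF walk_refl] by auto

lemma graph_dist_sym: "p \<in> S \<Longrightarrow> q \<in> S \<Longrightarrow> G p q = G q p"
  by (meson antisym graph_dist_le_walk shortest_walk walk_rev)

lemma graph_dist_triangle:
  assumes "p \<in> S" "q \<in> S" "r \<in> S" shows "G p r \<le> G p q + G q r"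
proof -
  obtain f g where "walk f (G p q) p q" "walk g (G q r) q r"
    using shortest_walk assms by blast
  then show ?thesis
    using graph_dist_le_walk walk_append by blast
qed

lemma graph_dist_adj: "adj p q \<Longrightarrow> G p q \<le> 1"
  using graph_dist_le_walk walk_edge by blast

lemma adj_of_graph_dist_eq_1: "p \<in> S \<Longrightarrow> q \<in> S \<Longrightarrow> G p q = 1 \<Longrightarrow> adj p q"
  using shortest_walk unfolding walk_def by (metis One_nat_def zero_less_one)

text \<open>Both vertices descend to ancestors at level j; these lie within (lam - 1)/a^j of c, so
  the two ancestors are equal or adjacent.\<close>
lemma graph_dist_le_via_level:
  assumes "(c, k) \<in> S" "(c', k') \<in> S" "j \<le> k" "j \<le> k'" "j = 0 \<or> dist c c' < 1 / a ^ j"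
  shows "G (c, k) (c', k') \<le> (k - j) + (k' - j) + 1"
proof -
  let ?A = "a / (a - 1)"
  obtain f cj where f: "walk f (k - j) (c, k) (cj, j)" "cj \<in> Xs j"
    "dist c cj \<le> ?A / a ^ j - ?A / a ^ k"
    using walk_ancestor assms(1,3) unfolding hfS_def by blast
  obtain f' cj' where f': "walk f' (k' - j) (c', k') (cj', j)" "cj' \<in> Xs j"
    "dist c' cj' \<le> ?A / a ^ j - ?A / a ^ k'"
    using walk_ancestor assms(2,4) unfolding hfS_def by blast
  have "0 < ?A / a ^ k" "0 < ?A / a ^ k'"
    using two_le_a by auto
  moreover have "?A / a ^ j \<le> (lam - 1) / a ^ j"
    using ratio_le_lam a_pos by (intro divide_right_mono) auto
  then have "?A / a ^ j \<le> lam / a ^ j - 1 / a ^ j"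
    by (simp add: diff_divide_distrib)
  ultimately have near: "dist c cj < lam / a ^ j - 1 / a ^ j" "dist c' cj' < lam / a ^ j - 1 / a ^ j"
    using f(3) f'(3) by linarith+
  show ?thesis
  proof (cases "cj = cj'")
    case True
    then show ?thesis
      using graph_dist_le_walk[OF walk_append[OF f(1)[unfolded True] walk_rev[OF f'(1)]]] by simp
  next
    case False
    have "j \<noteq> 0"
    proof
      assume "j = 0"
      then show False
        using f(2) f'(2) Xs_0 False by auto
    qed
    then have "dist c c' < 1 / a ^ j"
      using assms(5) by simp
    moreover have "0 < 1 / a ^ j"
      using a_pos by simp
    ultimately have "dist c cj < lam / a ^ j" "dist c cj' < lam / a ^ j"
      using near dist_triangle[of c cj' c'] by linarith+
    then have "c \<in> Bl X cj (lam / a ^ j) \<inter> Bl X cj' (lam / a ^ j)"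
      using assms(1) Xs_subset unfolding Bl_def hfS_def by (auto simp: dist_commute)
    then have "adj (cj, j) (cj', j)"
      using f(2) f'(2) False unfolding hf_adj_def hfS_def by auto
    then show ?thesis
      using graph_dist_le_walk[OF walk_append[OF walk_append[OF f(1) walk_edge] walk_rev[OF f'(1)]]]
      by simp
  qed
qed

lemma graph_dist_le_of_dist_less:
  assumes "(c, k) \<in> S" "(c', k') \<in> S" "l - s \<le> k" "l - s \<le> k'"
    "dist c c' < C / a ^ l" "C \<le> a ^ s"
  shows "G (c, k) (c', k') \<le> (k - (l - s)) + (k' - (l - s)) + 1"
proof (rule graph_dist_le_via_level[OF assms(1-4)])
  show "l - s = 0 \<or> dist c c' < 1 / a ^ (l - s)"
  proof (cases "s \<le> l")
    case True
    then have "1 / a ^ (l - s) = a ^ s / a ^ l"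
      using a_pos by (simp add: power_diff)
    moreover have "C / a ^ l \<le> a ^ s / a ^ l"
      using assms(6) a_pos by (simp add: divide_right_mono)
    ultimately show ?thesis
      using assms(5) by simp
  qed simp
qed

section \<open>Estimates along edge paths\<close>

lemma walk_level_step:
  assumes "walk f N p q" "i < N"
  shows "snd (f (Suc i)) \<le> Suc (snd (f i))" "snd (f i) \<le> Suc (snd (f (Suc i)))"
  using assms adj_level adj_sym unfolding walk_def by blast+

lemma walk_level_lipschitz:
  assumes f: "walk f N p q" and "i \<le> j" "j \<le> N"
  shows "snd (f j) \<le> snd (f i) + (j - i)" "snd (f i) \<le> snd (f j) + (j - i)"
proof -
  have "snd (f j) \<le> snd (f i) + (j - i) \<and> snd (f i) \<le> snd (f j) + (j - i)"
    using assms(2,3)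
  proof (induction j rule: dec_induct)
    case (step l)
    then show ?case
      using walk_level_step[OF f, of l] by auto
  qed simp
  then show "snd (f j) \<le> snd (f i) + (j - i)" "snd (f i) \<le> snd (f j) + (j - i)"
    by auto
qed

lemma graph_dist_level:
  assumes "p \<in> S" "q \<in> S"
  shows "snd q \<le> snd p + G p q" "snd p \<le> snd q + G p q"
  using walk_level_lipschitz[of _ "G p q" p q 0 "G p q"] shortest_walk[OF assms]
  unfolding walk_def by auto

lemma graph_dist_root: "(c, k) \<in> S \<Longrightarrow> G (c, k) (x0, 0) = k"
  using graph_dist_level(2)[of "(c, k)" "(x0, 0)"] graph_dist_le_walk walk_to_root[of "(c, k)"]
    root_in_S by fastforce

lemma walk_excess_nonneg:
  assumes f: "walk f N p q" and "i \<le> N" shows "0 \<le> walk_excess f i"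
proof -
  obtain j where j: "j \<le> i" "snd (f j) = lowest_level f i"
    using lowest_level_attained by blast
  have "snd (f 0) \<le> snd (f j) + j" "snd (f i) \<le> snd (f j) + (i - j)"
    using walk_level_lipschitz[OF f, of 0 j] walk_level_lipschitz[OF f, of j i] j assms(2) by auto
  then show ?thesis
    unfolding walk_excess_def using j by linarith
qed

text \<open>A potential that grows, along each edge of a walk, by at least the distance between the
  centres of its ends; T is the lowest level so far, e the excess and k the current level.\<close>
definition walk_bound :: "nat \<Rightarrow> real \<Rightarrow> nat \<Rightarrow> real" where
  "walk_bound T e k = (6 + 2 * lam * e) / a ^ T - 3 / a ^ k"

lemma walk_bound_same_level:
  assumes "T \<le> k" shows "walk_bound T e k + 2 * lam / a ^ k \<le> walk_bound T (e + 1) k"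
proof -
  have "2 * lam * (1 / a ^ k) \<le> 2 * lam * (1 / a ^ T)"
    using inverse_power_antimono[OF assms] two_le_lam by (intro mult_left_mono) auto
  then show ?thesis
    unfolding walk_bound_def by (simp add: add_divide_distrib algebra_simps)
qed

lemma walk_bound_up:
  "walk_bound T e k + (1 / a ^ k + 1 / a ^ Suc k) \<le> walk_bound T e (Suc k)"
proof -
  have "4 / a ^ Suc k \<le> 2 / a ^ k"
    using two_le_a by (simp add: field_simps)
  then show ?thesis
    unfolding walk_bound_def by simp
qed

lemma walk_bound_down:
  assumes "T \<le> k"
  shows "walk_bound T e (Suc k) + (1 / a ^ Suc k + 1 / a ^ k) \<le> walk_bound T (e + 2) k"
proof -
  have "4 * (1 / a ^ k) \<le> 4 * lam * (1 / a ^ T)"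
    using inverse_power_antimono[OF assms] two_le_lam a_pos by (intro mult_mono) auto
  moreover have "0 < 1 / a ^ Suc k"
    using a_pos by simp
  moreover have "walk_bound T (e + 2) k - walk_bound T e (Suc k) =
      4 * lam * (1 / a ^ T) - 3 * (1 / a ^ k) + 3 * (1 / a ^ Suc k)"
    unfolding walk_bound_def by (simp add: add_divide_distrib algebra_simps)
  ultimately show ?thesis
    by linarith
qed

lemma walk_bound_new_lowest:
  assumes "0 \<le> e"
  shows "walk_bound (Suc k) e (Suc k) + (1 / a ^ Suc k + 1 / a ^ k) \<le> walk_bound k e k"
proof -
  define R where "R = 6 + 2 * lam * e"
  have "2 * 1 \<le> (R - 4) * (a - 1)"
    unfolding R_def using assms two_le_lam two_le_a by (intro mult_mono) auto
  then have "(R - 2) / a + 1 \<le> R - 3"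
    using a_pos by (simp add: field_simps)
  then have "((R - 2) / a + 1) * (1 / a ^ k) \<le> (R - 3) * (1 / a ^ k)"
    using a_pos by (intro mult_right_mono) auto
  moreover have "walk_bound (Suc k) e (Suc k) + (1 / a ^ Suc k + 1 / a ^ k) = ((R - 2) / a + 1) * (1 / a ^ k)"
    "walk_bound k e k = (R - 3) * (1 / a ^ k)"
    unfolding walk_bound_def R_def[symmetric] using a_pos by (simp_all add: field_simps)
  ultimately show ?thesis
    by simp
qed

lemma walk_bound_step:
  assumes f: "walk f N p q" and "i < N"
  shows "walk_bound (lowest_level f i) (walk_excess f i) (snd (f i)) + dist (fst (f i)) (fst (f (Suc i)))
    \<le> walk_bound (lowest_level f (Suc i)) (walk_excess f (Suc i)) (snd (f (Suc i)))"
proof -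
  define T k k' c c' e where "T = lowest_level f i" and "k = snd (f i)" and "k' = snd (f (Suc i))"
    and "c = fst (f i)" and "c' = fst (f (Suc i))" and "e = walk_excess f i"
  have "T \<le> k"
    unfolding T_def k_def by (rule lowest_level_le) simp
  have "0 \<le> e"
    unfolding e_def using walk_excess_nonneg[OF f] assms(2) by simp
  have "adj (c, k) (c', k')"
    using f assms(2) unfolding walk_def c_def k_def c'_def k'_def by simp
  then have step: "(k' = k \<and> dist c c' < 2 * lam / a ^ k) \<or>
      ((k = Suc k' \<or> k' = Suc k) \<and> dist c c' < 1 / a ^ k + 1 / a ^ k')"
    by (rule adj_dist)
  have T': "lowest_level f (Suc i) = min T k'"
    unfolding T_def k'_def by (rule lowest_level_Suc)
  have e': "walk_excess f (Suc i) = e + 1 + 2 * (real (min T k') - real T) - (real k' - real k)"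
    unfolding walk_excess_def e_def T' T_def k_def k'_def by simp
  consider "k' = k" "dist c c' < 2 * lam / a ^ k"
    | "k' = Suc k" "dist c c' < 1 / a ^ k + 1 / a ^ Suc k"
    | "k = Suc k'" "T \<le> k'" "dist c c' < 1 / a ^ Suc k' + 1 / a ^ k'"
    | "k = Suc k'" "T = k" "dist c c' < 1 / a ^ Suc k' + 1 / a ^ k'"
    using step \<open>T \<le> k\<close> by fastforce
  then have "walk_bound T e k + dist c c' \<le> walk_bound (min T k') (walk_excess f (Suc i)) k'"
  proof cases
    case 1
    then show ?thesis
      using walk_bound_same_level[OF \<open>T \<le> k\<close>, of e] \<open>T \<le> k\<close> e' by simp
  next
    case 2
    then show ?thesis
      using walk_bound_up[of T e k] \<open>T \<le> k\<close> e' by simp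
  next
    case 3
    then have "walk_excess f (Suc i) = e + 2"
      using e' by simp
    then show ?thesis
      using 3 walk_bound_down[OF \<open>T \<le> k'\<close>, of e] by simp
  next
    case 4
    then have "walk_excess f (Suc i) = e" "min T k' = k'"
      using e' by simp_all
    then show ?thesis
      using 4 walk_bound_new_lowest[OF \<open>0 \<le> e\<close>, of k'] by simp
  qed
  then show ?thesis
    unfolding T' T_def k_def k'_def c_def c'_def e_def .
qed

lemma walk_dist_bound:
  assumes f: "walk f N p q" and "i \<le> N"
  shows "dist (fst p) (fst (f i)) \<le> walk_bound (lowest_level f i) (walk_excess f i) (snd (f i))"
  using assms(2)
proof (induction i)
  case 0
  have "0 \<le> 3 / a ^ snd p"
    using a_pos by simp
  then show ?case
    using f unfolding walk_def walk_bound_def walk_excess_def lowest_level_0 by simp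
next
  case (Suc i)
  then show ?case
    using walk_bound_step[OF f, of i] dist_triangle[of "fst p" "fst (f (Suc i))" "fst (f i)"] by simp
qed

lemma walk_steep_descent:
  assumes f: "walk f N p q" and "j \<le> N" and "snd (f j) + j \<le> snd p"
  shows "snd (f j) + j = snd p" "dist (fst p) (fst (f j)) \<le> 3 / a ^ snd (f j)"
proof -
  show level: "snd (f j) + j = snd p"
    using walk_level_lipschitz(2)[OF f, of 0 j] assms f unfolding walk_def by simp
  have "lowest_level f j \<le> snd (f j)"
    by (rule lowest_level_le) simp
  moreover have "0 \<le> walk_excess f j"
    by (rule walk_excess_nonneg[OF f \<open>j \<le> N\<close>])
  ultimately have "lowest_level f j = snd (f j)" "walk_excess f j = 0"
    using level f unfolding walk_excess_def walk_def by auto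
  then show "dist (fst p) (fst (f j)) \<le> 3 / a ^ snd (f j)"
    using walk_dist_bound[OF f \<open>j \<le> N\<close>] unfolding walk_bound_def by simp
qed

lemma walk_lowest_vertex_near_start:
  assumes g: "walk g L p q" and E: "walk_excess g L \<le> E"
  obtains i where "i \<le> L" "snd (g i) = lowest_level g L"
    "dist (fst p) (fst (g i)) \<le> (3 + 2 * a * E) / a ^ lowest_level g L"
proof -
  define T where "T = lowest_level g L"
  obtain i where i: "i \<le> L" "snd (g i) = T"
    unfolding T_def using lowest_level_attained by blast
  have Ti: "lowest_level g i = T"
    using lowest_level_antimono[OF i(1), of g] lowest_level_le[of i i g] i(2) unfolding T_def by simp
  have "snd q \<le> T + (L - i)"
    using walk_level_lipschitz(1)[OF g i(1) order_refl] g i(2) unfolding walk_def by simp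
  then have "walk_excess g i \<le> walk_excess g L"
    using g i Ti unfolding walk_excess_def walk_def T_def by (simp add: of_nat_diff)
  then have excess: "0 \<le> walk_excess g i" "walk_excess g i \<le> E"
    using E walk_excess_nonneg[OF g i(1)] by auto
  have "dist (fst p) (fst (g i)) \<le> walk_bound T (walk_excess g i) T"
    using walk_dist_bound[OF g i(1)] i(2) Ti by simp
  also have "\<dots> \<le> (3 + 2 * a * E) / a ^ T"
  proof -
    have "lam * walk_excess g i \<le> a * E"
      using lam_le_a two_le_lam excess by (intro mult_mono) auto
    then have "(6 + 2 * lam * walk_excess g i) / a ^ T \<le> (6 + 2 * a * E) / a ^ T"
      using a_pos by (intro divide_right_mono) auto
    moreover have "(6 + 2 * a * E) / a ^ T = (3 + 2 * a * E) / a ^ T + 3 / a ^ T"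
      by (simp flip: add_divide_distrib)
    ultimately show ?thesis
      unfolding walk_bound_def by linarith
  qed
  finally show ?thesis
    using that i unfolding T_def by blast
qed

text \<open>The estimate of walk_dist_bound decays like a^-T while the excess allowed here grows only
  linearly in T - l, so the ends could not be (3/4)/a^(l+1) apart if T were larger than l + 8.\<close>
lemma walk_lowest_level_le:
  assumes g: "walk g L p q"
    and excess: "walk_excess g L + 2 * real l \<le> 2 * real (lowest_level g L) + 7"
    and far: "3 / 4 / a ^ Suc l < dist (fst p) (fst q)"
  shows "lowest_level g L \<le> l + 8"
proof (rule ccontr)
  define T e where "T = lowest_level g L" and "e = walk_excess g L"
  assume deep: "\<not> ?thesis"
  define t where "t = T - l"
  have t: "T = Suc l + (t - 1)" "9 \<le> t" "real t = real T - real l"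
    using deep unfolding t_def T_def by auto
  then have "0 \<le> e" "e \<le> 2 * real t + 7"
    using excess walk_excess_nonneg[OF g order_refl] unfolding e_def T_def by linarith+
  have "dist (fst p) (fst q) \<le> walk_bound T e (snd q)"
    using walk_dist_bound[OF g order_refl] g unfolding T_def e_def walk_def by simp
  also have "\<dots> \<le> (6 + 2 * a * (2 * real t + 7)) / a ^ T"
  proof -
    have "lam * e \<le> a * (2 * real t + 7)"
      using lam_le_a two_le_lam \<open>0 \<le> e\<close> \<open>e \<le> 2 * real t + 7\<close> by (intro mult_mono) auto
    then have "(6 + 2 * lam * e) / a ^ T \<le> (6 + 2 * a * (2 * real t + 7)) / a ^ T"
      using a_pos by (intro divide_right_mono) auto
    moreover have "0 \<le> 3 / a ^ snd q"
      using a_pos by simp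
    ultimately show ?thesis
      unfolding walk_bound_def by linarith
  qed
  also have "\<dots> \<le> 3 / 4 * a ^ (t - 1) / a ^ T"
    using linear_le_power[OF two_le_a t(2)] a_pos by (intro divide_right_mono) auto
  also have "\<dots> = 3 / 4 / a ^ Suc l"
    unfolding t(1) power_add using a_pos by simp
  finally show False
    using far by simp
qed

section \<open>Geodesics of the metric graph\<close>

abbreviation "D \<equiv> D1 X a lam Xs"
abbreviation "MG \<equiv> mg_points X a lam Xs"

definition route_dist :: "'a hvert \<Rightarrow> 'a hvert \<Rightarrow> real \<Rightarrow> 'a hvert \<Rightarrow> 'a hvert \<Rightarrow> real \<Rightarrow> real" where
  "route_dist u1 v1 s u2 v2 t = min (s + G u1 u2 + t) (min (s + G u1 v2 + (1 - t))
      (min ((1 - s) + G v1 u2 + t) ((1 - s) + G v1 v2 + (1 - t))))"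

lemma D1_eq_route_dist: "D (u1, v1, s) (u2, v2, t) =
  (if u1 \<noteq> v1 \<and> u1 = u2 \<and> v1 = v2 then min \<bar>s - t\<bar> (route_dist u1 v1 s u2 v2 t)
   else if u1 \<noteq> v1 \<and> u1 = v2 \<and> v1 = u2 then min \<bar>s - (1 - t)\<bar> (route_dist u1 v1 s u2 v2 t)
   else route_dist u1 v1 s u2 v2 t)"
proof -
  have Min_4: "Min {w, x, y, z} = min w (min x (min y z))" for w x y z :: real
    by (simp add: min.assoc)
  show ?thesis
    unfolding D1_def route_dist_def Let_def prod.case Min_4 by (rule refl)
qed

lemma D1_le_route_dist: "D (u1, v1, s) (u2, v2, t) \<le> route_dist u1 v1 s u2 v2 t"
  unfolding D1_eq_route_dist by (auto intro: min.cobounded2)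

lemma mg_points_iff:
  "(u, v, t) \<in> MG \<longleftrightarrow> u \<in> S \<and> ((adj u v \<and> 0 \<le> t \<and> t \<le> 1) \<or> (v = u \<and> t = 0))"
  unfolding mg_points_def by auto

lemma mg_points_in_S: "(u, v, t) \<in> MG \<Longrightarrow> u \<in> S \<and> v \<in> S"
  unfolding mg_points_iff using adj_in_S by blast

lemma D1_vtx_nonneg:
  assumes "(u, v, t) \<in> MG" shows "0 \<le> D (vtx p) (u, v, t)"
proof -
  have "0 \<le> t" "t \<le> 1"
    using assms unfolding mg_points_iff by auto
  then have "0 \<le> route_dist p p 0 u v t"
    unfolding route_dist_def by simp
  then show ?thesis
    unfolding vtx_def D1_eq_route_dist by simp
qed

definition vertex_point :: "'a mgpoint \<Rightarrow> bool" where
  "vertex_point r \<longleftrightarrow> r \<in> MG \<and> (snd (snd r) = 0 \<or> snd (snd r) = 1)"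

definition vertex_of :: "'a mgpoint \<Rightarrow> 'a hvert" where
  "vertex_of r = (if snd (snd r) = 0 then fst r else fst (snd r))"

lemma vertex_point_vtx: "p \<in> S \<Longrightarrow> vertex_point (vtx p)"
  unfolding vertex_point_def vtx_def mg_points_iff by simp

lemma vertex_of_vtx [simp]: "vertex_of (vtx p) = p"
  unfolding vertex_of_def vtx_def by simp

lemma vertex_of_in_S: "vertex_point r \<Longrightarrow> vertex_of r \<in> S"
  unfolding vertex_point_def vertex_of_def using mg_points_in_S by (cases r) auto

lemma vertex_of_near_ends:
  assumes "vertex_point (u, v, t)"
  shows "real (G (vertex_of (u, v, t)) u) \<le> t" "real (G (vertex_of (u, v, t)) v) \<le> 1 - t"
    "real (G u (vertex_of (u, v, t))) \<le> t" "real (G v (vertex_of (u, v, t))) \<le> 1 - t"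
proof -
  have S: "u \<in> S" "v \<in> S"
    using assms mg_points_in_S[of u v t] unfolding vertex_point_def by simp_all
  have "G u v \<le> 1 \<and> G v u \<le> 1"
    using assms graph_dist_self[OF S(1)] graph_dist_adj[of u v] graph_dist_adj[of v u] adj_sym[of u v]
    unfolding vertex_point_def mg_points_iff by auto
  then show "real (G (vertex_of (u, v, t)) u) \<le> t" "real (G (vertex_of (u, v, t)) v) \<le> 1 - t"
    "real (G u (vertex_of (u, v, t))) \<le> t" "real (G v (vertex_of (u, v, t))) \<le> 1 - t"
    using assms graph_dist_self[OF S(1)] graph_dist_self[OF S(2)]
    unfolding vertex_point_def vertex_of_def by (auto simp del: One_nat_def)
qed

lemma route_dist_vertex_points:
  assumes r: "vertex_point (u1, v1, s)" and r': "vertex_point (u2, v2, t)"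
  shows "route_dist u1 v1 s u2 v2 t = G (vertex_of (u1, v1, s)) (vertex_of (u2, v2, t))"
proof -
  let ?e = "vertex_of (u1, v1, s)" and ?e' = "vertex_of (u2, v2, t)"
  have S: "u1 \<in> S" "v1 \<in> S" "u2 \<in> S" "v2 \<in> S" "?e \<in> S" "?e' \<in> S"
    using mg_points_in_S[of u1 v1 s] mg_points_in_S[of u2 v2 t] vertex_of_in_S[OF r]
      vertex_of_in_S[OF r'] r r' unfolding vertex_point_def by simp_all
  note ends = vertex_of_near_ends[OF r] vertex_of_near_ends[OF r']
  have tri: "real (G ?e ?e') \<le> real (G ?e x) + G x y + G y ?e'" if "x \<in> S" "y \<in> S" for x y
    using graph_dist_triangle[of ?e x ?e'] graph_dist_triangle[of x y ?e'] S that by linarith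
  have "real (G ?e ?e') \<le> s + G u1 u2 + t" "real (G ?e ?e') \<le> s + G u1 v2 + (1 - t)"
    "real (G ?e ?e') \<le> (1 - s) + G v1 u2 + t" "real (G ?e ?e') \<le> (1 - s) + G v1 v2 + (1 - t)"
    using tri[of u1 u2] tri[of u1 v2] tri[of v1 u2] tri[of v1 v2] ends S by linarith+
  then have "real (G ?e ?e') \<le> route_dist u1 v1 s u2 v2 t"
    unfolding route_dist_def by simp
  moreover have "real (G ?e ?e') \<in> {s + G u1 u2 + t, s + G u1 v2 + (1 - t),
      (1 - s) + G v1 u2 + t, (1 - s) + G v1 v2 + (1 - t)}"
    using r r' unfolding vertex_point_def vertex_of_def by auto
  then have "route_dist u1 v1 s u2 v2 t \<le> G ?e ?e'"
    unfolding route_dist_def by auto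
  ultimately show ?thesis
    by linarith
qed

lemma D1_vtx_vertex_point:
  assumes "vertex_point r" "p \<in> S"
  shows "D (vtx p) r = G p (vertex_of r)" "D r (vtx p) = G (vertex_of r) p"
proof -
  obtain u v t where r: "r = (u, v, t)"
    by (cases r)
  have "D (vtx p) r = route_dist p p 0 u v t"
    unfolding r vtx_def D1_eq_route_dist by simp
  moreover have "D r (vtx p) = route_dist u v t p p 0"
    unfolding r vtx_def D1_eq_route_dist by (cases "u = v") auto
  ultimately show "D (vtx p) r = G p (vertex_of r)" "D r (vtx p) = G (vertex_of r) p"
    using route_dist_vertex_points[of p p 0] route_dist_vertex_points[of _ _ _ p p 0]
      vertex_point_vtx[OF assms(2)] assms(1) unfolding r vtx_def by (simp_all add: vertex_of_def)
qed

lemma adj_of_D1_eq_1: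
  assumes "vertex_point r" "vertex_point r'" "D r r' = 1"
  shows "adj (vertex_of r) (vertex_of r')"
proof -
  obtain u1 v1 s u2 v2 t where rr: "r = (u1, v1, s)" "r' = (u2, v2, t)"
    by (metis prod_cases3)
  have r: "vertex_point (u1, v1, s)" and r': "vertex_point (u2, v2, t)"
    and D: "D (u1, v1, s) (u2, v2, t) = 1"
    using assms unfolding rr by simp_all
  let ?e = "vertex_of (u1, v1, s)" and ?e' = "vertex_of (u2, v2, t)"
  have route: "route_dist u1 v1 s u2 v2 t = G ?e ?e'"
    using route_dist_vertex_points[OF r r'] .
  have "1 \<le> G ?e ?e'"
    using D1_le_route_dist[of u1 v1 s u2 v2 t] D route by simp
  moreover have "G ?e ?e' \<le> 1"
  proof (cases "u1 \<noteq> v1 \<and> ((u1 = u2 \<and> v1 = v2) \<or> (u1 = v2 \<and> v1 = u2))")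
    case True
    then have "adj u1 v1"
      using r unfolding vertex_point_def mg_points_iff by auto
    then have "G x y \<le> 1" if "x \<in> {u1, v1}" "y \<in> {u1, v1}" for x y
      using that graph_dist_adj[of u1 v1] graph_dist_adj[of v1 u1] adj_sym[of u1 v1]
        graph_dist_self[of u1] graph_dist_self[of v1] adj_in_S[of u1 v1] by auto
    moreover have "?e \<in> {u1, v1}" "?e' \<in> {u1, v1}"
      using True unfolding vertex_of_def by auto
    ultimately show ?thesis
      by blast
  next
    case False
    then have "\<not> (u1 \<noteq> v1 \<and> u1 = u2 \<and> v1 = v2)" "\<not> (u1 \<noteq> v1 \<and> u1 = v2 \<and> v1 = u2)"
      by auto
    then have "D (u1, v1, s) (u2, v2, t) = route_dist u1 v1 s u2 v2 t"
      unfolding D1_eq_route_dist by (simp only: if_not_P if_False)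
    then show ?thesis
      using D route by simp
  qed
  ultimately show ?thesis
    using adj_of_graph_dist_eq_1 vertex_of_in_S r r' unfolding rr by simp
qed

lemma vertex_point_of_D1_nat:
  assumes r: "r \<in> MG" and "D (vtx p) r = real i"
  shows "vertex_point r"
proof -
  obtain u v t where rr: "r = (u, v, t)"
    by (cases r)
  have t: "0 \<le> t" "t \<le> 1"
    using r unfolding rr mg_points_iff by auto
  have "route_dist p p 0 u v t = real i"
    using assms unfolding rr vtx_def D1_eq_route_dist by auto
  then have "t = real i - G p u \<or> t = 1 + G p v - real i \<or> t = real i - 1 - G p u \<or>
      t = 2 + G p v - real i"
    unfolding route_dist_def min_def by (auto split: if_splits)
  then have "t \<in> \<int>"
    by (auto intro!: Ints_diff Ints_add)
  then obtain z where z: "t = of_int z"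
    by (auto elim: Ints_cases)
  with t have "0 \<le> z" "z \<le> 1"
    by simp_all
  then have "z = 0 \<or> z = 1"
    by arith
  then have "t = 0 \<or> t = 1"
    using z by auto
  then show ?thesis
    using r unfolding rr vertex_point_def by auto
qed

lemma geodesic_vertex_walk:
  assumes geo: "geodesic_seg X a lam Xs (vtx p) (vtx q) P" and p: "p \<in> S" and q: "q \<in> S"
  obtains g where "walk g (G p q) p q" "\<forall>i\<le>G p q. \<exists>r\<in>P. \<forall>v\<in>S. D (vtx v) r = G v (g i)"
proof -
  obtain \<gamma> L where L: "L = D (vtx p) (vtx q)" and P: "\<gamma> ` {0..L} = P"
    and \<gamma>0: "\<gamma> 0 = vtx p" and \<gamma>L: "\<gamma> L = vtx q" and \<gamma>M: "\<forall>s\<in>{0..L}. \<gamma> s \<in> MG"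
    and iso: "\<forall>s\<in>{0..L}. \<forall>t\<in>{0..L}. D (\<gamma> s) (\<gamma> t) = \<bar>s - t\<bar>"
    using geo unfolding geodesic_seg_def by blast
  have LG: "L = G p q"
    using D1_vtx_vertex_point(1)[OF vertex_point_vtx[OF q] p] L by simp
  define g where "g i = vertex_of (\<gamma> (real i))" for i
  have in_L: "real i \<in> {0..L}" if "i \<le> G p q" for i
    using that LG by simp
  have vp: "vertex_point (\<gamma> (real i))" if "i \<le> G p q" for i
  proof (rule vertex_point_of_D1_nat)
    show "\<gamma> (real i) \<in> MG"
      using \<gamma>M in_L[OF that] by blast
    show "D (vtx p) (\<gamma> (real i)) = real i"
      using iso in_L[OF that] in_L[of 0] \<gamma>0 by fastforce
  qed
  have "walk g (G p q) p q"
    unfolding walk_def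
  proof (intro conjI allI impI)
    show "g 0 = p" "g (G p q) = q"
      using \<gamma>0 \<gamma>L LG unfolding g_def by simp_all
    show "g i \<in> S" if "i \<le> G p q" for i
      unfolding g_def using vertex_of_in_S[OF vp[OF that]] .
    show "adj (g i) (g (Suc i))" if "i < G p q" for i
    proof -
      have "D (\<gamma> (real i)) (\<gamma> (real (Suc i))) = 1"
        using iso in_L[of i] in_L[of "Suc i"] that by simp
      moreover have "vertex_point (\<gamma> (real i))" "vertex_point (\<gamma> (real (Suc i)))"
        using vp[of i] vp[of "Suc i"] that by simp_all
      ultimately show ?thesis
        unfolding g_def by (rule adj_of_D1_eq_1[rotated 2])
    qed
  qed
  moreover have "\<forall>i\<le>G p q. \<exists>r\<in>P. \<forall>v\<in>S. D (vtx v) r = G v (g i)"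
    using D1_vtx_vertex_point(1)[OF vp] in_L P unfolding g_def by blast
  ultimately show ?thesis
    using that by blast
qed

lemma INF_D1_geodesic_le:
  fixes K :: real
  assumes geo: "geodesic_seg X a lam Xs (vtx p) (vtx q) P" and "p \<in> S" "q \<in> S" "u \<in> S"
    and near: "\<And>g. walk g (G p q) p q \<Longrightarrow> \<exists>i\<le>G p q. G u (g i) \<le> K"
  shows "(INF r\<in>P. D (vtx u) r) \<le> K"
proof -
  obtain g where g: "walk g (G p q) p q" "\<forall>i\<le>G p q. \<exists>r\<in>P. \<forall>v\<in>S. D (vtx v) r = G v (g i)"
    using geodesic_vertex_walk[OF geo \<open>p \<in> S\<close> \<open>q \<in> S\<close>] by blast
  obtain i where "i \<le> G p q" "G u (g i) \<le> K"
    using near[OF g(1)] by blast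
  then obtain r where r: "r \<in> P" "D (vtx u) r \<le> K"
    using g(2) \<open>u \<in> S\<close> by fastforce
  have "P \<subseteq> MG"
    using geo unfolding geodesic_seg_def by blast
  then have "\<forall>r\<in>P. 0 \<le> D (vtx u) r"
    using D1_vtx_nonneg by (metis prod_cases3 subsetD)
  then have "bdd_below ((\<lambda>r. D (vtx u) r) ` P)"
    by (intro bdd_belowI[of _ 0]) auto
  then show ?thesis
    using r by (rule cINF_lower2)
qed

section \<open>The centre c(x, y)\<close>

lemma ctr_bounds:
  assumes x: "x \<in> X" and y: "y \<in> X" and "0 < dist x y" and u: "(zt, nt) \<in> ctr X a Xs x y"
  shows "zt \<in> Xs nt" "dist x zt < 2 / a ^ nt" "dist y zt < 2 / a ^ nt" "1 / a ^ Suc nt < dist x y"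
proof -
  define P where "P k \<longleftrightarrow> (\<exists>z\<in>Xs k. x \<in> Bl X z (2 / a ^ k) \<and> y \<in> Bl X z (2 / a ^ k))" for k
  have nt: "nt = (GREATEST k. P k)"
    using u unfolding ctr_def ctr_level_def P_def by simp
  show "zt \<in> Xs nt" "dist x zt < 2 / a ^ nt" "dist y zt < 2 / a ^ nt"
    using u unfolding ctr_def Bl_def by (auto simp: dist_commute)
  have bounded: "k \<le> nat \<lceil>4 / dist x y\<rceil>" if "P k" for k
  proof -
    obtain z where "dist z x < 2 / a ^ k" "dist z y < 2 / a ^ k"
      using \<open>P k\<close> unfolding P_def Bl_def by auto
    then have "dist x y < 4 / a ^ k"
      using dist_triangle3[of x y z] by simp
    then have "a ^ k < 4 / dist x y"
      using \<open>0 < dist x y\<close> a_pos by (simp add: field_simps)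
    moreover have "real k < 2 ^ k"
      by (metis less_exp of_nat_less_iff of_nat_numeral of_nat_power)
    moreover have "(2::real) ^ k \<le> a ^ k"
      using two_le_a by (intro power_mono) auto
    ultimately show ?thesis
      by linarith
  qed
  have "\<not> P (Suc nt)"
    using Greatest_le_nat[of P, OF _ bounded] unfolding nt[symmetric] by fastforce
  moreover obtain z' where z': "z' \<in> Xs (Suc nt)" "dist x z' < 1 / a ^ Suc nt"
    using exists_close_center[OF x] by blast
  moreover have "1 / a ^ Suc nt < 2 / a ^ Suc nt"
    using a_pos by (simp add: divide_strict_right_mono)
  ultimately have "2 / a ^ Suc nt \<le> dist y z'"
    using x y unfolding P_def Bl_def by (fastforce simp: dist_commute)
  then show "1 / a ^ Suc nt < dist x y"
    using z'(2) dist_triangle[of y z' x] by (simp add: dist_commute)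
qed

lemma ctr_geometry:
  assumes x: "x \<in> X" and y: "y \<in> X"
    and xz: "dist x z < 1 / a ^ m" and yw: "dist y w < 1 / a ^ n"
    and small: "1 / a ^ m + 1 / a ^ n < dist x y / a ^ 2"
    and u: "(zt, nt) \<in> ctr X a Xs x y"
  shows "(zt, nt) \<in> S" "nt < m" "nt < n" "dist z zt < 3 / a ^ nt" "dist w zt < 3 / a ^ nt"
    "3 / 4 / a ^ Suc nt < dist z w" "dist z w < 5 / a ^ nt"
proof -
  have pos: "0 < 1 / a ^ k" for k
    using a_pos by simp
  have "dist x y / a ^ 2 \<le> dist x y / 4"
    using power_mono[OF two_le_a, of 2] by (intro divide_left_mono) auto
  then have small': "1 / a ^ m + 1 / a ^ n < dist x y / 4"
    using small by linarith
  then have "0 < dist x y"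
    using pos[of m] pos[of n] by linarith
  note c = ctr_bounds[OF x y this u]
  show "(zt, nt) \<in> S"
    using c(1) unfolding hfS_def by simp
  have "dist x y < 4 / a ^ nt"
    using c(2,3) dist_triangle3[of x y zt] by (simp add: dist_commute)
  then have mn: "1 / a ^ m < 1 / a ^ nt" "1 / a ^ n < 1 / a ^ nt"
    using small' pos[of m] pos[of n] by linarith+
  then show "nt < m" "nt < n"
    using inverse_power_antimono by (meson not_less not_le)+
  show "dist z zt < 3 / a ^ nt" "dist w zt < 3 / a ^ nt"
    using c(2,3) mn dist_triangle[of z zt x] dist_triangle[of w zt y] xz yw
    by (simp_all add: dist_commute)
  show "3 / 4 / a ^ Suc nt < dist z w"
    using c(4) small' xz yw dist_triangle[of x y z] dist_triangle[of z y w]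
    by (simp add: dist_commute)
  show "dist z w < 5 / a ^ nt"
    using \<open>dist x y < 4 / a ^ nt\<close> small' xz yw dist_triangle[of z w x] dist_triangle[of x w y]
    by (simp add: dist_commute)
qed

section \<open>The three sides of the triangle\<close>

lemma root_side_near_ctr:
  assumes g: "walk g k (c, k) (x0, 0)" and "nt \<le> k" "(zt, nt) \<in> S" "dist c zt < 3 / a ^ nt"
  shows "G (zt, nt) (g (k - nt)) \<le> 7"
proof -
  have "snd (g (k - nt)) \<le> nt"
    using walk_level_lipschitz(2)[OF g, of "k - nt" k] g \<open>nt \<le> k\<close> unfolding walk_def by simp
  then have "snd (g (k - nt)) + (k - nt) \<le> snd (c, k)"
    using \<open>nt \<le> k\<close> by simp
  note descent = walk_steep_descent[OF g diff_le_self this]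
  have lvl: "snd (g (k - nt)) = nt"
    using descent(1) \<open>nt \<le> k\<close> unfolding snd_conv by linarith
  then have near: "dist c (fst (g (k - nt))) \<le> 3 / a ^ nt"
    using descent(2) by simp
  obtain c' where c': "g (k - nt) = (c', nt)"
    using lvl by (metis prod.collapse)
  have "(c', nt) \<in> S"
    using g c' unfolding walk_def by (metis diff_le_self)
  moreover have "dist zt c' < 6 / a ^ nt"
    using near c' assms(4) dist_triangle[of zt c' c] by (simp add: dist_commute)
  moreover have "(6::real) \<le> a ^ 3"
    using power_mono[OF two_le_a, of 3] by simp
  ultimately have "G (zt, nt) (c', nt) \<le> (nt - (nt - 3)) + (nt - (nt - 3)) + 1"
    using assms(3) by (intro graph_dist_le_of_dist_less[where C = 6]) auto
  then show ?thesis
    using c' by simp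
qed

lemma middle_lowest_level:
  assumes g: "walk g (G (z, m) (w, n)) (z, m) (w, n)" and S: "(z, m) \<in> S" "(w, n) \<in> S"
    and "nt < m" "nt < n" and lo: "3 / 4 / a ^ Suc nt < dist z w" and hi: "dist z w < 5 / a ^ nt"
  shows "nt \<le> lowest_level g (G (z, m) (w, n)) + 3" "lowest_level g (G (z, m) (w, n)) \<le> nt + 8"
    "walk_excess g (G (z, m) (w, n)) \<le> 23"
proof -
  define L T e where "L = G (z, m) (w, n)" and "T = lowest_level g L" and "e = walk_excess g L"
  have "(5::real) \<le> a ^ 3"
    using power_mono[OF two_le_a, of 3] by simp
  then have "L \<le> (m - (nt - 3)) + (n - (nt - 3)) + 1"
    unfolding L_def using graph_dist_le_of_dist_less[OF S _ _ hi] \<open>nt < m\<close> \<open>nt < n\<close> by simp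
  then have "L + 2 * nt \<le> m + n + 7"
    using \<open>nt < m\<close> \<open>nt < n\<close> by linarith
  then have L: "real L + 2 * real nt \<le> real m + real n + 7"
    using of_nat_mono[of "L + 2 * nt" "m + n + 7", where 'a = real] by simp
  have e: "e = real L + 2 * real T - real m - real n"
    using g unfolding e_def T_def L_def walk_excess_def walk_def by simp
  have "0 \<le> e"
    unfolding e_def L_def using walk_excess_nonneg[OF g] by simp
  then show "nt \<le> lowest_level g (G (z, m) (w, n)) + 3"
    using L e unfolding T_def L_def by linarith
  have e_le: "e + 2 * real nt \<le> 2 * real T + 7"
    using L e by linarith
  then show T_le: "lowest_level g (G (z, m) (w, n)) \<le> nt + 8"
    using walk_lowest_level_le[of g L "(z, m)" "(w, n)" nt] g lo unfolding e_def T_def L_def by simp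
  show "walk_excess g (G (z, m) (w, n)) \<le> 23"
    using e_le T_le unfolding e_def T_def L_def by linarith
qed

lemma middle_side_near_ctr:
  assumes g: "walk g (G (z, m) (w, n)) (z, m) (w, n)"
    and S: "(z, m) \<in> S" "(w, n) \<in> S" "(zt, nt) \<in> S" and "nt < m" "nt < n"
    and lo: "3 / 4 / a ^ Suc nt < dist z w" and hi: "dist z w < 5 / a ^ nt"
    and z_zt: "dist z zt < 3 / a ^ nt"
  shows "\<exists>i\<le>G (z, m) (w, n). G (zt, nt) (g i) \<le> 29"
proof -
  define L T where "L = G (z, m) (w, n)" and "T = lowest_level g L"
  note bounds = middle_lowest_level[OF g S(1,2) \<open>nt < m\<close> \<open>nt < n\<close> lo hi, folded L_def T_def]
  obtain i where i: "i \<le> L" "snd (g i) = T" and z_c: "dist z (fst (g i)) \<le> (3 + 46 * a) / a ^ T"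
    using walk_lowest_vertex_near_start[OF g[folded L_def] bounds(3)] unfolding T_def by auto
  obtain c where c: "g i = (c, T)"
    using i(2) by (metis prod.collapse)
  have "(c, T) \<in> S"
    using g i(1) c unfolding L_def walk_def by metis
  have "a ^ nt \<le> a ^ 3 * a ^ T"
    using two_le_a bounds(1) by (simp flip: power_add)
  then have "1 / a ^ T \<le> a ^ 3 / a ^ nt"
    using a_pos by (simp add: field_simps)
  then have "(3 + 46 * a) * (1 / a ^ T) \<le> (3 + 46 * a) * (a ^ 3 / a ^ nt)"
    using a_pos by (intro mult_left_mono) auto
  then have "dist z c \<le> (3 + 46 * a) * a ^ 3 / a ^ nt"
    using z_c c by simp
  then have "dist zt c < ((3 + 46 * a) * a ^ 3 + 3) / a ^ nt"
    using z_zt dist_triangle[of zt c z] by (simp add: dist_commute add_divide_distrib)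
  then have "G (zt, nt) (c, T) \<le> (nt - (nt - 10)) + (T - (nt - 10)) + 1"
    using S(3) \<open>(c, T) \<in> S\<close> bounds(1) power_ten_bound[OF two_le_a]
    by (intro graph_dist_le_of_dist_less) auto
  then have "G (zt, nt) (g i) \<le> 29"
    using c bounds(2) by simp
  then show ?thesis
    using i(1) unfolding L_def by blast
qed

lemma root_geodesics_near_ctr:
  assumes c: "(c, k) \<in> S" and u: "(zt, nt) \<in> S" and "nt \<le> k" and near: "dist c zt < 3 / a ^ nt"
  shows "geodesic_seg X a lam Xs (vtx (x0, 0)) (vtx (c, k)) P \<Longrightarrow> (INF r\<in>P. D (vtx (zt, nt)) r) \<le> 7"
    and "geodesic_seg X a lam Xs (vtx (c, k)) (vtx (x0, 0)) P \<Longrightarrow> (INF r\<in>P. D (vtx (zt, nt)) r) \<le> 7"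
proof -
  have k: "G (c, k) (x0, 0) = k" "G (x0, 0) (c, k) = k"
    using graph_dist_root[OF c] graph_dist_sym[OF c root_in_S] by simp_all
  show "(INF r\<in>P. D (vtx (zt, nt)) r) \<le> 7"
    if "geodesic_seg X a lam Xs (vtx (x0, 0)) (vtx (c, k)) P"
  proof (rule INF_D1_geodesic_le[OF that root_in_S c u])
    fix g assume "walk g (G (x0, 0) (c, k)) (x0, 0) (c, k)"
    then have "walk (\<lambda>i. g (k - i)) k (c, k) (x0, 0)"
      using walk_rev k by fastforce
    from root_side_near_ctr[OF this \<open>nt \<le> k\<close> u near]
    show "\<exists>i\<le>G (x0, 0) (c, k). real (G (zt, nt) (g i)) \<le> 7"
      using k \<open>nt \<le> k\<close> by (intro exI[of _ nt]) simp
  qed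
  show "(INF r\<in>P. D (vtx (zt, nt)) r) \<le> 7"
    if "geodesic_seg X a lam Xs (vtx (c, k)) (vtx (x0, 0)) P"
  proof (rule INF_D1_geodesic_le[OF that c root_in_S u])
    fix g assume "walk g (G (c, k) (x0, 0)) (c, k) (x0, 0)"
    from root_side_near_ctr[OF this[unfolded k(1)] \<open>nt \<le> k\<close> u near]
    show "\<exists>i\<le>G (c, k) (x0, 0). real (G (zt, nt) (g i)) \<le> 7"
      using k by (intro exI[of _ "k - nt"]) simp
  qed
qed

lemma middle_geodesic_near_ctr:
  assumes "geodesic_seg X a lam Xs (vtx (z, m)) (vtx (w, n)) P"
    and "(z, m) \<in> S" "(w, n) \<in> S" "(zt, nt) \<in> S" "nt < m" "nt < n"
    and "3 / 4 / a ^ Suc nt < dist z w" "dist z w < 5 / a ^ nt" "dist z zt < 3 / a ^ nt"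
  shows "(INF r\<in>P. D (vtx (zt, nt)) r) \<le> 29"
proof (rule INF_D1_geodesic_le[OF assms(1-4)])
  fix g assume "walk g (G (z, m) (w, n)) (z, m) (w, n)"
  from middle_side_near_ctr[OF this assms(2-9)]
  show "\<exists>i\<le>G (z, m) (w, n). real (G (zt, nt) (g i)) \<le> 29"
    by auto
qed

end

theorem lemma2p6:
  fixes X :: "'a::metric_space set" and Xs :: "nat \<Rightarrow> 'a set" and x0 x y z w :: 'a
    and a lam :: real and m n :: nat and u :: "'a hvert" and P1 P2 P3 :: "'a mgpoint set"
  assumes "compact X" and "diameter X = 1 / 2"
    and "filling_seq X a Xs x0"
    and "a \<ge> lam" and "lam \<ge> 2" and "lam \<ge> 1 + a / (a - 1)"
    and "x \<in> X" and "y \<in> X"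
    and "(z, m) \<in> hfS Xs" and "(w, n) \<in> hfS Xs"
    and "x \<in> Bl X z (1 / a ^ m)" and "y \<in> Bl X w (1 / a ^ n)"
    and "1 / a ^ m + 1 / a ^ n < dist x y / a ^ 2"
    and "u \<in> ctr X a Xs x y"
    and "geodesic_seg X a lam Xs (vtx (x0, 0)) (vtx (z, m)) P1"
    and "geodesic_seg X a lam Xs (vtx (z, m)) (vtx (w, n)) P2"
    and "geodesic_seg X a lam Xs (vtx (w, n)) (vtx (x0, 0)) P3"
  shows "approx_center X a lam Xs 80 (vtx u) P1 P2 P3"
proof -
  interpret hyperbolic_filling X a lam Xs x0
    using assms(3-6) by unfold_locales auto
  obtain zt nt where u: "u = (zt, nt)"
    by (cases u)
  have "dist x z < 1 / a ^ m" "dist y w < 1 / a ^ n"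
    using assms(11,12) unfolding Bl_def by (simp_all add: dist_commute)
  note ctr = ctr_geometry[OF assms(7,8) this assms(13) assms(14)[unfolded u]]
  have "(INF r\<in>P1. D1 X a lam Xs (vtx u) r) \<le> 7" "(INF r\<in>P3. D1 X a lam Xs (vtx u) r) \<le> 7"
    using root_geodesics_near_ctr[OF assms(9) ctr(1) _ ctr(4)] assms(15)
      root_geodesics_near_ctr[OF assms(10) ctr(1) _ ctr(5)] assms(17) ctr(2,3) u
    by auto
  moreover have "(INF r\<in>P2. D1 X a lam Xs (vtx u) r) \<le> 29"
    using middle_geodesic_near_ctr[OF assms(16,9,10) ctr(1-3,6,7,4)] u by simp
  ultimately show ?thesis
    unfolding approx_center_def by auto
qed

end
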